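(* Let $h_1',h_2',\dots$ be independent and uniformly distributed on $\mathcal{F}^d$, and let $h_i:=h_i'\circ\psi^{-1}$ (tasks on $\mathcal{X}$). Let $\Phi,\Phi':\{-1,1\}^m\to\mathcal{Z}$ be two fixed representations such that $T:=\Phi\circ\psi$ and $T':=\Phi'\circ\psi$ are bijections of $\mathcal{Z}$. For each $i$ let $g_i,g_i':\mathcal{Z}\to\mathbb{R}$ be the (unique) functions with $g_i\circ\Phi\in\mathcal{H}(h_i)$ and $g_i'\circ\Phi'\in\mathcal{H}(h_i)$, and set $g=(g_1,\dots,g_n)$, $g'=(g_1',\dots,g_n')$. Then, almost surely, $$\lim_{n\to\infty}\frac1n\Big(\widehat{\deg}(g\circ\Phi)-\widehat{\deg}(g'\circ\Phi')\Big)=0,$$ where $\widehat{\deg}(g\circ\Phi)=\sum_{i=1}^n\deg(g_i)+\sum_{j=1}^d\deg(\Phi_j)$ and similarly for $g'\circ\Phi'$.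
   Context: Standing setup: integers $m\ge d\ge 1$, $\mathcal{Z}=\{-1,1\}^d$, $\psi:\mathcal{Z}\to\{-1,1\}^m$ injective, $\mathcal{X}:=\psi(\mathcal{Z})$, latent distribution with full support on $\mathcal{Z}$. For $f:\{-1,1\}^n\to\mathbb{R}$ with Fourier–Walsh expansion $f=\sum_{S\subseteq[n]}\hat f(S)\chi_S$, $\chi_S(x)=\prod_{i\in S}x_i$, $\deg(f)=\max\{|S|:\hat f(S)\ne0\}$ (0 for constants). Tasks are functions on $\mathcal{X}$ (extended arbitrarily to $\{-1,1\}^m$); $\mathcal{H}(h)$ is the set of $f:\{-1,1\}^m\to\mathbb{R}$ agreeing with $h$ on $\mathcal{X}$. Finite-precision convention: fix a finite set $V\subset\mathbb{R}$ with $\{-1,1\}\subseteq V$ and let $\mathcal{F}^d$ be the (finite) set of all functions $\{-1,1\}^d\to V$. *)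

theory Defs
  imports "HOL-Probability.Probability"
begin

definition cube :: "nat \<Rightarrow> int list set" where
  "cube n = {xs. length xs = n \<and> set xs \<subseteq> {-1, 1}}"

definition chi :: "nat set \<Rightarrow> int list \<Rightarrow> real" where
  "chi S x = (\<Prod>i\<in>S. real_of_int (x ! i))"

definition fourier :: "nat \<Rightarrow> (int list \<Rightarrow> real) \<Rightarrow> nat set \<Rightarrow> real" where
  "fourier n f S = (\<Sum>x\<in>cube n. f x * chi S x) / 2 ^ n"

text \<open>Degree of f as a function on {-1,1}^n (0 for constant / zero functions).\<close>
definition deg :: "nat \<Rightarrow> (int list \<Rightarrow> real) \<Rightarrow> nat" where
  "deg n f = Max (insert 0 (card ` {S. S \<subseteq> {..<n} \<and> fourier n f S \<noteq> 0}))"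

text \<open>The finite set F^d of functions {-1,1}^d -> V, each represented by its
canonical extension that is 0 outside the cube.\<close>
definition Fset :: "real set \<Rightarrow> nat \<Rightarrow> (int list \<Rightarrow> real) set" where
  "Fset V d = {f. (\<forall>x\<in>cube d. f x \<in> V) \<and> (\<forall>x. x \<notin> cube d \<longrightarrow> f x = 0)}"

definition Hset :: "nat \<Rightarrow> int list set \<Rightarrow> (int list \<Rightarrow> real) \<Rightarrow> (int list \<Rightarrow> real) set" where
  "Hset m X h = {f. \<forall>x\<in>X. f x = h x}"

definition degsum ::
  "nat \<Rightarrow> nat \<Rightarrow> (int list \<Rightarrow> int list) \<Rightarrow> (nat \<Rightarrow> int list \<Rightarrow> real) \<Rightarrow> nat \<Rightarrow> nat" where
  "degsum d m Phi g n = (\<Sum>i<n. deg d (g i)) + (\<Sum>j<d. deg m (\<lambda>x. real_of_int (Phi x ! j)))"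

end

theory Submission imports Defs begin

text \<open>Since T = Phi \<circ> psi is a bijection of the cube, the i-th head is forced to be
  g_i = h_i' \<circ> T\<inverse> on the cube, so deg g_i is a function of h_i' alone. Relabelling the
  cube by T\<inverse> permutes the finite set F^d, hence deg g_i and deg g_i' have the same
  distribution under the uniform law. The differences deg g_i - deg g_i' are therefore
  independent, bounded by d and centred, and the strong law of large numbers (here proved
  from Hoeffding's inequality and Borel--Cantelli) makes their averages vanish almost surely;
  the encoder terms contribute only a constant divided by n.\<close>

lemma (in prob_space) Hoeffding_abs_sum_ge_bounded_centered:
  fixes X :: "nat \<Rightarrow> 'a \<Rightarrow> real"
  assumes indep: "indep_vars (\<lambda>_. borel) X UNIV"
    and bounded: "\<And>i x. x \<in> space M \<Longrightarrow> \<bar>X i x\<bar> \<le> B"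
    and "B > 0"
    and centered: "\<And>i. expectation (X i) = 0"
    and "n > 0" and "\<delta> \<ge> 0"
  shows "prob {x\<in>space M. \<bar>\<Sum>i<n. X i x\<bar> \<ge> real n * \<delta>} \<le> 2 * exp (- (real n * \<delta>\<^sup>2) / (2 * B\<^sup>2))"
proof -
  interpret H: Hoeffding_ineq M "{..<n}" X "\<lambda>_. -B" "\<lambda>_. B" "\<Sum>i<n. expectation (X i)"
  proof unfold_locales
    show "indep_vars (\<lambda>_. borel) X {..<n}"
      by (rule indep_vars_subset[OF indep]) auto
    show "AE x in M. X i x \<in> {- B..B}" for i
    proof (rule AE_I2)
      fix x
      assume "x \<in> space M"
      with bounded[of x i] show "X i x \<in> {- B..B}"
        by (simp add: abs_le_iff)
    qed
  qed auto
  have "prob {x\<in>space M. \<bar>(\<Sum>i<n. X i x) - (\<Sum>i<n. expectation (X i))\<bar> \<ge> real n * \<delta>}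
      \<le> 2 * exp (-2 * (real n * \<delta>)\<^sup>2 / (\<Sum>i<n. (B - - B)\<^sup>2))"
    using H.Hoeffding_ineq_abs_ge[of "real n * \<delta>"] assms by (auto intro: sum_pos)
  also have "-2 * (real n * \<delta>)\<^sup>2 / (\<Sum>i<n. (B - - B)\<^sup>2) = - (real n * \<delta>\<^sup>2) / (2 * B\<^sup>2)"
    using assms by (simp add: power2_eq_square field_simps)
  finally show ?thesis
    by (simp add: centered)
qed

lemma (in prob_space) AE_eventually_abs_sum_less_bounded_centered:
  fixes X :: "nat \<Rightarrow> 'a \<Rightarrow> real"
  assumes indep: "indep_vars (\<lambda>_. borel) X UNIV"
    and bounded: "\<And>i x. x \<in> space M \<Longrightarrow> \<bar>X i x\<bar> \<le> B"
    and B: "B > 0"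
    and centered: "\<And>i. expectation (X i) = 0"
    and \<epsilon>: "\<epsilon> > 0"
  shows "AE x in M. eventually (\<lambda>n. \<bar>\<Sum>i<n. X i x\<bar> < real n * \<epsilon>) sequentially"
proof -
  have [measurable]: "random_variable borel (X i)" for i
    using indep unfolding indep_vars_def by blast
  define A where "A n = {x\<in>space M. \<bar>\<Sum>i<n. X i x\<bar> \<ge> real n * \<epsilon>}" for n
  define c where "c = \<epsilon>\<^sup>2 / (2 * B\<^sup>2)"
  have "c > 0"
    using B \<epsilon> by (simp add: c_def)
  have A_sets [measurable]: "A n \<in> sets M" for n
    unfolding A_def by measurable
  have "summable (\<lambda>n. measure M (A n))"
  proof (rule summable_comparison_test')
    show "summable (\<lambda>n. 2 * exp (-c) ^ n)"
      using \<open>c > 0\<close> by (intro summable_mult summable_geometric) auto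
    fix n :: nat
    assume "n \<ge> 1"
    then have "measure M (A n) \<le> 2 * exp (- (real n * \<epsilon>\<^sup>2) / (2 * B\<^sup>2))"
      unfolding A_def using \<epsilon> by (intro Hoeffding_abs_sum_ge_bounded_centered assms) auto
    also have "\<dots> = 2 * exp (-c) ^ n"
      by (simp add: c_def exp_of_nat_mult[symmetric])
    finally show "norm (measure M (A n)) \<le> 2 * exp (-c) ^ n"
      by simp
  qed
  from borel_cantelli_AE1[OF A_sets _ this]
  have "AE x in M. eventually (\<lambda>n. x \<in> space M - A n) sequentially"
    by (simp add: less_top[symmetric])
  then show ?thesis
    by (rule eventually_mono) (auto simp: A_def elim!: eventually_mono)
qed

theorem (in prob_space) strong_law_bounded_centered:
  fixes X :: "nat \<Rightarrow> 'a \<Rightarrow> real"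
  assumes indep: "indep_vars (\<lambda>_. borel) X UNIV"
    and bounded: "\<And>i x. x \<in> space M \<Longrightarrow> \<bar>X i x\<bar> \<le> B"
    and "B > 0"
    and centered: "\<And>i. expectation (X i) = 0"
  shows "AE x in M. (\<lambda>n. (\<Sum>i<n. X i x) / real n) \<longlonglongrightarrow> 0"
proof -
  have "AE x in M. eventually (\<lambda>n. \<bar>\<Sum>i<n. X i x\<bar> < real n * (1 / Suc k)) sequentially" for k :: nat
    by (rule AE_eventually_abs_sum_less_bounded_centered[OF assms]) auto
  then have "AE x in M. \<forall>k::nat. eventually (\<lambda>n. \<bar>\<Sum>i<n. X i x\<bar> < real n * (1 / Suc k)) sequentially"
    by (simp add: AE_all_countable)
  then show ?thesis
  proof (rule eventually_mono)
    fix x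
    assume small: "\<forall>k::nat. eventually (\<lambda>n. \<bar>\<Sum>i<n. X i x\<bar> < real n * (1 / Suc k)) sequentially"
    show "(\<lambda>n. (\<Sum>i<n. X i x) / real n) \<longlonglongrightarrow> 0"
    proof (rule tendstoI)
      fix e :: real
      assume "e > 0"
      then obtain k :: nat where k: "1 / Suc k < e"
        using reals_Archimedean[of e] by (auto simp: inverse_eq_divide)
      show "eventually (\<lambda>n. dist ((\<Sum>i<n. X i x) / real n) 0 < e) sequentially"
        using small[rule_format, of k] eventually_gt_at_top[of 0]
      proof eventually_elim
        case (elim n)
        then have "\<bar>\<Sum>i<n. X i x\<bar> / real n < 1 / Suc k"
          by (simp add: field_simps)
        with k show ?case
          by (simp add: abs_divide)
      qed
    qed
  qed
qed

lemma finite_cube: "finite (cube n)"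
proof -
  have "cube n = {xs. set xs \<subseteq> {-1, 1} \<and> length xs = n}"
    by (auto simp: cube_def)
  then show ?thesis
    using finite_lists_length_eq[of "{-1::int, 1}" n] by simp
qed

lemma deg_cong: "(\<And>x. x \<in> cube n \<Longrightarrow> f x = f' x) \<Longrightarrow> deg n f = deg n f'"
  unfolding deg_def fourier_def by (simp cong: sum.cong)

lemma deg_le: "deg n f \<le> n"
proof -
  have "finite {S. S \<subseteq> {..<n} \<and> fourier n f S \<noteq> 0}"
    by (rule finite_subset[of _ "Pow {..<n}"]) auto
  moreover have "\<forall>k\<in>insert 0 (card ` {S. S \<subseteq> {..<n} \<and> fourier n f S \<noteq> 0}). k \<le> n"
    using card_mono[of "{..<n}"] by fastforce
  ultimately show ?thesis
    unfolding deg_def by (subst Max_le_iff) auto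
qed

lemma finite_Fset: "finite V \<Longrightarrow> finite (Fset V d)"
proof -
  assume "finite V"
  have "inj_on (\<lambda>F. restrict F (cube d)) (Fset V d)"
  proof (rule inj_onI)
    fix F G
    assume "F \<in> Fset V d" "G \<in> Fset V d" "restrict F (cube d) = restrict G (cube d)"
    then show "F = G"
      unfolding Fset_def by (auto simp: fun_eq_iff restrict_def split: if_splits) metis
  qed
  moreover have "(\<lambda>F. restrict F (cube d)) ` Fset V d \<subseteq> PiE (cube d) (\<lambda>_. V)"
    by (auto simp: Fset_def)
  moreover have "finite (PiE (cube d) (\<lambda>_. V))"
    using \<open>finite V\<close> finite_cube by (intro finite_PiE) auto
  ultimately show ?thesis
    by (metis finite_imageD finite_subset)
qed

lemma Fset_nonempty: "1 \<in> V \<Longrightarrow> Fset V d \<noteq> {}"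
proof -
  assume "1 \<in> V"
  then have "(\<lambda>x. if x \<in> cube d then 1 else 0) \<in> Fset V d"
    by (auto simp: Fset_def)
  then show ?thesis
    by blast
qed

text \<open>F \<mapsto> F \<circ> T\<inverse> permutes F^d (after re-extending by 0 off the cube, which does not
  change the degree).\<close>

lemma sum_deg_Fset_comp_bij:
  assumes T: "bij_betw T (cube d) (cube d)"
  shows "(\<Sum>F\<in>Fset V d. deg d (\<lambda>z. F (inv_into (cube d) T z))) = (\<Sum>F\<in>Fset V d. deg d F)"
proof -
  define P where "P F = (\<lambda>z. if z \<in> cube d then F (inv_into (cube d) T z) else 0)"
    for F :: "int list \<Rightarrow> real"
  define Q where "Q F = (\<lambda>z. if z \<in> cube d then F (T z) else 0)" for F :: "int list \<Rightarrow> real"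
  have inv: "inv_into (cube d) T z \<in> cube d" "T (inv_into (cube d) T z) = z" if "z \<in> cube d" for z
    using T that by (auto simp: bij_betw_def inv_into_into f_inv_into_f)
  have fwd: "T w \<in> cube d" "inv_into (cube d) T (T w) = w" if "w \<in> cube d" for w
    using T that by (auto simp: bij_betw_def inv_into_f_f)
  have "(\<Sum>F\<in>Fset V d. deg d (\<lambda>z. F (inv_into (cube d) T z))) = (\<Sum>F\<in>Fset V d. deg d (P F))"
    by (intro sum.cong refl deg_cong) (simp add: P_def)
  also have "\<dots> = (\<Sum>F\<in>Fset V d. deg d F)"
    by (rule sum.reindex_bij_witness[where i = Q and j = P])
      (use inv fwd in \<open>auto simp: fun_eq_iff P_def Q_def Fset_def\<close>)
  finally show ?thesis .
qed

text \<open>The degree of the head that a task F on the latent cube forces on an encoder with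
  Phi \<circ> psi = T.\<close>

definition head_deg :: "nat \<Rightarrow> (int list \<Rightarrow> int list) \<Rightarrow> (int list \<Rightarrow> real) \<Rightarrow> nat" where
  "head_deg d T F = deg d (\<lambda>z. F (inv_into (cube d) T z))"

lemma head_deg_le: "head_deg d T F \<le> d"
  unfolding head_deg_def by (rule deg_le)

lemma deg_eq_head_deg:
  assumes bij: "bij_betw (P \<circ> psi) (cube d) (cube d)"
    and inj: "inj_on psi (cube d)"
    and head: "G \<circ> P \<in> Hset m (psi ` cube d) (F \<circ> inv_into (cube d) psi)"
  shows "deg d G = head_deg d (P \<circ> psi) F"
  unfolding head_deg_def
proof (rule deg_cong)
  fix z
  assume "z \<in> cube d"
  define w where "w = inv_into (cube d) (P \<circ> psi) z"
  have "z \<in> (P \<circ> psi) ` cube d"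
    using bij \<open>z \<in> cube d\<close> by (simp add: bij_betw_def)
  then have w: "w \<in> cube d" "P (psi w) = z"
    unfolding w_def using f_inv_into_f[of z "P \<circ> psi"] by (auto intro: inv_into_into)
  have "G (P (psi w)) = F (inv_into (cube d) psi (psi w))"
    using head w(1) by (auto simp: Hset_def)
  also have "inv_into (cube d) psi (psi w) = w"
    using inj w(1) by (simp add: inv_into_f_f)
  finally show "G z = F (inv_into (cube d) (P \<circ> psi) z)"
    using w by (simp add: w_def)
qed

lemma expectation_head_deg_uniform:
  assumes "bij_betw T (cube d) (cube d)" and "finite V" and "1 \<in> V"
  shows "measure_pmf.expectation (pmf_of_set (Fset V d)) (\<lambda>F. real (head_deg d T F))
       = measure_pmf.expectation (pmf_of_set (Fset V d)) (\<lambda>F. real (deg d F))"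
  using sum_deg_Fset_comp_bij[OF assms(1), of V] finite_Fset[OF assms(2)] Fset_nonempty[OF assms(3)]
  by (simp add: head_deg_def integral_pmf_of_set flip: of_nat_sum)

lemma (in prob_space) expectation_head_deg_diff_uniform:
  assumes [measurable]: "h \<in> measurable M (count_space UNIV)"
    and distr_h: "distr M (count_space UNIV) h = measure_pmf (pmf_of_set (Fset V d))"
    and "bij_betw T (cube d) (cube d)" and "bij_betw T' (cube d) (cube d)"
    and "finite V" and "1 \<in> V"
  shows "expectation (\<lambda>\<omega>. real (head_deg d T (h \<omega>)) - real (head_deg d T' (h \<omega>))) = 0"
proof -
  let ?U = "measure_pmf (pmf_of_set (Fset V d))"
  have "expectation (\<lambda>\<omega>. real (head_deg d T (h \<omega>)) - real (head_deg d T' (h \<omega>)))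
      = integral\<^sup>L (distr M (count_space UNIV) h) (\<lambda>F. real (head_deg d T F) - real (head_deg d T' F))"
    by (subst integral_distr) auto
  also have "\<dots> = integral\<^sup>L ?U (\<lambda>F. real (head_deg d T F) - real (head_deg d T' F))"
    by (simp add: distr_h)
  also have "\<dots> = integral\<^sup>L ?U (\<lambda>F. real (head_deg d T F)) - integral\<^sup>L ?U (\<lambda>F. real (head_deg d T' F))"
    using finite_Fset[of V d] Fset_nonempty[of V d] assms
    by (intro Bochner_Integration.integral_diff integrable_measure_pmf_finite) auto
  finally show ?thesis
    using expectation_head_deg_uniform assms(3-6) by simp
qed

lemma tendsto_add_const_over_n:
  fixes a :: "nat \<Rightarrow> real"
  assumes "(\<lambda>n. a n / real n) \<longlonglongrightarrow> 0"
  shows "(\<lambda>n. (a n + C) / real n) \<longlonglongrightarrow> 0"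
  using tendsto_add[OF assms lim_const_over_n[of C]] by (simp add: add_divide_distrib)

theorem theorem3:
  fixes M :: "'a measure" and d m :: nat and V :: "real set"
    and psi Phi Phi' :: "int list \<Rightarrow> int list"
    and h' :: "nat \<Rightarrow> 'a \<Rightarrow> int list \<Rightarrow> real"
    and g g' :: "'a \<Rightarrow> nat \<Rightarrow> int list \<Rightarrow> real"
  assumes "prob_space M"
    and "1 \<le> d" and "d \<le> m"
    and "finite V" and "{-1, 1} \<subseteq> V"
    and "psi ` cube d \<subseteq> cube m" and "inj_on psi (cube d)"
    and "Phi ` cube m \<subseteq> cube d" and "Phi' ` cube m \<subseteq> cube d"
    and "bij_betw (Phi \<circ> psi) (cube d) (cube d)"
    and "bij_betw (Phi' \<circ> psi) (cube d) (cube d)"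
    and "prob_space.indep_vars M (\<lambda>_. count_space UNIV) h' UNIV"
    and "\<And>i. distr M (count_space UNIV) (h' i) = measure_pmf (pmf_of_set (Fset V d))"
    and "\<And>\<omega> i. (g \<omega> i \<circ> Phi) \<in> Hset m (psi ` cube d) (h' i \<omega> \<circ> inv_into (cube d) psi)"
    and "\<And>\<omega> i. (g' \<omega> i \<circ> Phi') \<in> Hset m (psi ` cube d) (h' i \<omega> \<circ> inv_into (cube d) psi)"
  shows "AE \<omega> in M. (\<lambda>n. (real (degsum d m Phi (g \<omega>) n) - real (degsum d m Phi' (g' \<omega>) n)) / real n)
            \<longlonglongrightarrow> 0"
proof -
  interpret prob_space M by fact
  define X where
    "X i \<omega> = real (head_deg d (Phi \<circ> psi) (h' i \<omega>)) - real (head_deg d (Phi' \<circ> psi) (h' i \<omega>))" for i \<omega>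
  have [measurable]: "h' i \<in> measurable M (count_space UNIV)" for i
    using assms(12) unfolding indep_vars_def by blast
  have indep: "indep_vars (\<lambda>_. borel) X UNIV"
    unfolding X_def by (rule indep_vars_compose2[OF assms(12)]) auto
  have bounded: "\<bar>X i \<omega>\<bar> \<le> real d" for i \<omega>
    using head_deg_le[of d "Phi \<circ> psi" "h' i \<omega>"] head_deg_le[of d "Phi' \<circ> psi" "h' i \<omega>"] by (simp add: X_def abs_le_iff)
  have centered: "expectation (X i) = 0" for i
    unfolding X_def using assms(4,5,10,11,13) by (intro expectation_head_deg_diff_uniform) auto
  have "deg d (g \<omega> i) = head_deg d (Phi \<circ> psi) (h' i \<omega>)"
    "deg d (g' \<omega> i) = head_deg d (Phi' \<circ> psi) (h' i \<omega>)" for \<omega> i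
    using deg_eq_head_deg assms(7,10,11,14,15) by blast+
  then have "real (degsum d m Phi (g \<omega>) n) - real (degsum d m Phi' (g' \<omega>) n)
      = (\<Sum>i<n. X i \<omega>) + (real (\<Sum>j<d. deg m (\<lambda>x. real_of_int (Phi x ! j)))
                             - real (\<Sum>j<d. deg m (\<lambda>x. real_of_int (Phi' x ! j))))" for \<omega> n
    by (simp add: degsum_def X_def sum_subtractf)
  moreover have "AE \<omega> in M. (\<lambda>n. (\<Sum>i<n. X i \<omega>) / real n) \<longlonglongrightarrow> 0"
    using assms(2) by (intro strong_law_bounded_centered[OF indep bounded] centered) auto
  ultimately show ?thesis
    by (auto elim!: eventually_mono intro: tendsto_add_const_over_n)
qed

end
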